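(* Let $\alpha>1$, let $X=\{x_j:j\in J\}\subset\mathbb{R}^2$ be finite, and let $s'\in\mathbb{R}^2$. Then $s'$ is the minimiser of $s\mapsto P_2(s,X(s'))$ if and only if $s'=s_\alpha^*$.
   Context: For $\beta>1$ and a finite indexed family $Y=(y_j)_{j\in J}$, $P_\beta(s,Y)=\sum_{j\in J}\|s-y_j\|^\beta+\max_{j\in J}\|s-y_j\|^\beta$; $s_\alpha^*$ is the unique minimiser of $P_\alpha(\cdot,X)$. For a point $s$, $x_j(s)=s+\|s-x_j\|^{\alpha-2}(x_j-s)$ (with $x_j(s)=s$ when $s=x_j$), so that $\|x_j(s)-s\|=\|x_j-s\|^{\alpha-1}$, and $X(s)=(x_j(s))_{j\in J}$. *)

theory Defs
  imports "HOL-Analysis.Analysis"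
begin

definition P :: "real \<Rightarrow> 'j set \<Rightarrow> ('j \<Rightarrow> real^2) \<Rightarrow> real^2 \<Rightarrow> real" where
  "P beta J y s = (\<Sum>j\<in>J. norm (s - y j) powr beta) + Max ((\<lambda>j. norm (s - y j) powr beta) ` J)"

definition is_minimiser :: "('a \<Rightarrow> real) \<Rightarrow> 'a \<Rightarrow> bool" where
  "is_minimiser f s \<longleftrightarrow> (\<forall>t. f s \<le> f t)"

definition s_star :: "real \<Rightarrow> 'j set \<Rightarrow> ('j \<Rightarrow> real^2) \<Rightarrow> real^2" where
  "s_star alpha J x = (THE s. is_minimiser (P alpha J x) s)"

definition Xs :: "real \<Rightarrow> ('j \<Rightarrow> real^2) \<Rightarrow> real^2 \<Rightarrow> 'j \<Rightarrow> real^2" where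
  "Xs alpha x s j = (if s = x j then s else s + (norm (s - x j) powr (alpha - 2)) *\<^sub>R (x j - s))"

end

theory Submission
  imports Defs
begin

text \<open>The points \<open>x\<^sub>j(s')\<close> are chosen so that at \<open>s'\<close> the gradient of \<open>\<parallel>\<cdot> - x\<^sub>j(s')\<parallel>\<^sup>2\<close> is
  \<open>2 (s' - x\<^sub>j(s'))\<close> and that of \<open>\<parallel>\<cdot> - x\<^sub>j\<parallel>\<^sup>\<alpha>\<close> is \<open>\<alpha> (s' - x\<^sub>j(s'))\<close>, while
  \<open>\<parallel>s' - x\<^sub>j(s')\<parallel> = \<parallel>s' - x\<^sub>j\<parallel>\<^sup>\<alpha>\<^sup>-\<^sup>1\<close> orders the indices as \<open>\<parallel>s' - x\<^sub>j\<parallel>\<close> does.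
  Since \<open>P\<^sub>\<beta>(\<cdot>, Y)\<close> is strictly convex with one-sided directional derivative
  \<open>\<Sum>\<^sub>j \<nabla>\<^sub>j \<bullet> d + max\<^sub>k \<nabla>\<^sub>k \<bullet> d\<close> (the maximum over the farthest points \<open>y\<^sub>k\<close>), the first-order
  optimality conditions of \<open>P\<^sub>2(\<cdot>, X(s'))\<close> and \<open>P\<^sub>\<alpha>(\<cdot>, X)\<close> at \<open>s'\<close> agree up to positive
  factors, and they characterise the respective unique minimisers.\<close>

lemma powr_mult_self:
  fixes a p :: real assumes "a \<ge> 0"
  shows "a powr p * a = a powr (p + 1)"
  using assms by (cases "a = 0") (simp_all add: powr_add)

lemma powr_le_powr_iff:
  fixes a b p :: real assumes "a \<ge> 0" "b \<ge> 0" "p > 0"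
  shows "a powr p \<le> b powr p \<longleftrightarrow> a \<le> b"
  using assms by (metis not_le powr_less_mono2 powr_mono2 less_imp_le)

lemma powr_tangent_le:
  fixes a b p :: real assumes "p > 1" "a \<ge> 0" "b \<ge> 0"
  shows "a powr p + p * a powr (p - 1) * (b - a) \<le> b powr p"
proof -
  have "a powr (p - 1) * b \<le> (a powr (p - 1)) powr (p / (p - 1)) / (p / (p - 1)) + b powr p / p"
    by (rule Youngs_inequality) (use assms in \<open>auto simp: field_simps\<close>)
  also have "(a powr (p - 1)) powr (p / (p - 1)) = a powr p"
    using assms by (simp add: powr_powr)
  finally have "p * (a powr (p - 1) * b) \<le> a powr p * (p - 1) + b powr p"
    using assms by (simp add: field_simps)
  moreover have "a powr (p - 1) * a = a powr p"
    using powr_mult_self[OF assms(2), of "p - 1"] by simp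
  ultimately show ?thesis by (simp add: algebra_simps)
qed

text \<open>Apply the tangent inequality at \<open>a\<close> and at the midpoint \<open>m\<close>; the slope at \<open>m\<close> is strictly
  larger in the direction of \<open>b - a\<close>.\<close>
lemma powr_tangent_less:
  fixes a b p :: real assumes "p > 1" "a > 0" "b \<ge> 0" "a \<noteq> b"
  shows "a powr p + p * a powr (p - 1) * (b - a) < b powr p"
proof -
  define m where "m = (a + b) / 2"
  define u v where "u = p * m powr (p - 1)" and "v = p * a powr (p - 1)"
  have m: "m > 0" "b - m = (b - a) / 2" "m - a = (b - a) / 2"
    using assms by (simp_all add: m_def field_simps)
  have upper: "m powr p + u * ((b - a) / 2) \<le> b powr p"
    using powr_tangent_le[of p m b] assms m unfolding u_def by simp
  have lower: "a powr p + v * ((b - a) / 2) \<le> m powr p"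
    using powr_tangent_le[of p a m] assms m unfolding v_def by simp
  have "v * (b - a) < u * (b - a)"
  proof (cases "a < b")
    case True
    then have "a powr (p - 1) < m powr (p - 1)"
      using assms by (intro powr_less_mono2) (auto simp: m_def)
    with True assms show ?thesis by (simp add: u_def v_def)
  next
    case False
    then have "m powr (p - 1) < a powr (p - 1)"
      using assms m by (intro powr_less_mono2) (auto simp: m_def)
    with False assms show ?thesis by (simp add: u_def v_def)
  qed
  moreover have "u * ((b - a) / 2) = u * (b - a) / 2" "v * ((b - a) / 2) = v * (b - a) / 2"
    by simp_all
  ultimately show ?thesis
    using upper lower unfolding v_def by linarith
qed

text \<open>The gradient of \<open>z \<mapsto> \<parallel>z\<parallel> powr p\<close> (at \<open>z = 0\<close> only for \<open>p > 1\<close>).\<close>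
definition powr_grad :: "real \<Rightarrow> 'a::real_inner \<Rightarrow> 'a" where
  "powr_grad p z = (p * norm z powr (p - 2)) *\<^sub>R z"

lemma norm_powr_grad:
  assumes "p \<ge> 0"
  shows "norm (powr_grad p z) = p * norm z powr (p - 1)"
  using assms powr_mult_self[of "norm z" "p - 2"] by (simp add: powr_grad_def)

lemma powr_grad_inner_self:
  "powr_grad p z \<bullet> z = p * norm z powr p"
proof -
  have "norm z powr (p - 2) * (norm z * norm z) = norm z powr p"
    using powr_mult_self[of "norm z" "p - 2"] powr_mult_self[of "norm z" "p - 1"]
    by (simp flip: mult.assoc)
  then show ?thesis
    by (simp add: powr_grad_def power2_eq_square flip: power2_norm_eq_inner)
qed

lemma powr_grad_inner_diff_le:
  assumes "p \<ge> 0"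
  shows "powr_grad p z \<bullet> (y - z) \<le> p * norm z powr (p - 1) * (norm y - norm z)"
  using norm_cauchy_schwarz[of "powr_grad p z" y] norm_powr_grad[OF assms, of z]
    powr_grad_inner_self[of p z] powr_mult_self[of "norm z" "p - 1"]
  by (simp add: inner_diff_right algebra_simps)

lemma norm_powr_tangent_le:
  fixes y z :: "'a::real_inner" and p :: real assumes "p > 1"
  shows "norm z powr p + powr_grad p z \<bullet> (y - z) \<le> norm y powr p"
  using powr_grad_inner_diff_le[of p z y] powr_tangent_le[of p "norm z" "norm y"] assms
  by simp

lemma norm_powr_tangent_less:
  fixes y z :: "'a::real_inner" and p :: real assumes "p > 1" "y \<noteq> z"
  shows "norm z powr p + powr_grad p z \<bullet> (y - z) < norm y powr p"
proof (cases "z = 0")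
  case True
  then show ?thesis using assms by (simp add: powr_grad_def)
next
  case z: False
  show ?thesis
  proof (cases "norm y = norm z")
    case True
    have "0 < norm (y - z) ^ 2" using assms by simp
    also have "norm (y - z) ^ 2 = 2 * (norm z * norm z - z \<bullet> y)"
      using True by (simp add: power2_norm_eq_inner inner_diff_left inner_diff_right inner_commute)
        (simp add: dot_square_norm power2_eq_square)
    finally have "z \<bullet> (y - z) < 0"
      by (simp add: inner_diff_right power2_eq_square flip: power2_norm_eq_inner)
    then have "powr_grad p z \<bullet> (y - z) < 0"
      using assms z by (simp add: powr_grad_def mult_pos_neg)
    with True show ?thesis by simp
  next
    case False
    then show ?thesis
      using powr_grad_inner_diff_le[of p z y] powr_tangent_less[of p "norm z" "norm y"] assms z
      by simp
  qed
qed

lemma isCont_powr_grad: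
  fixes z :: "'a::real_inner" assumes "p > 1"
  shows "isCont (powr_grad p) z"
proof (cases "z = 0")
  case False
  then show ?thesis
    unfolding powr_grad_def by (intro continuous_intros) auto
next
  case True
  have "((\<lambda>v::'a. p * norm v powr (p - 1)) \<longlongrightarrow> p * norm (0::'a) powr (p - 1)) (at 0)"
    using assms by (intro tendsto_intros tendsto_powr') auto
  then have "((\<lambda>v. norm (powr_grad p v)) \<longlongrightarrow> 0) (at (0::'a))"
    using assms by (simp add: norm_powr_grad)
  then have "(powr_grad p \<longlongrightarrow> 0) (at (0::'a))"
    by (rule tendsto_norm_zero_cancel)
  with True show ?thesis
    by (simp add: isCont_def powr_grad_def)
qed

text \<open>From the tangent inequality at the moving point \<open>z + t d\<close> and continuity of the gradient.\<close>
lemma eventually_norm_powr_line_le: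
  fixes z d :: "'a::real_inner" and p e :: real assumes "p > 1" "e > 0"
  shows "\<forall>\<^sub>F t in at_right 0.
    norm (z + t *\<^sub>R d) powr p \<le> norm z powr p + t * (powr_grad p z \<bullet> d + e)"
proof -
  have "((\<lambda>t. powr_grad p (z + t *\<^sub>R d) \<bullet> d) \<longlongrightarrow> powr_grad p z \<bullet> d) (at_right 0)"
    by (intro tendsto_intros isCont_tendsto_compose[OF isCont_powr_grad[OF assms(1)]])
      (auto intro!: tendsto_eq_intros)
  then have "\<forall>\<^sub>F t in at_right 0. powr_grad p (z + t *\<^sub>R d) \<bullet> d < powr_grad p z \<bullet> d + e"
    using assms(2) by (intro order_tendstoD(2)) auto
  moreover have "\<forall>\<^sub>F t in at_right 0. (t::real) > 0"
    by (simp add: eventually_at_right_less)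
  ultimately show ?thesis
  proof eventually_elim
    case (elim t)
    have "norm (z + t *\<^sub>R d) powr p \<le> norm z powr p + t * (powr_grad p (z + t *\<^sub>R d) \<bullet> d)"
      using norm_powr_tangent_le[OF assms(1), of "z + t *\<^sub>R d" z]
      by (simp add: inner_diff_right)
    also have "\<dots> \<le> norm z powr p + t * (powr_grad p z \<bullet> d + e)"
      using elim by (intro add_left_mono mult_left_mono) auto
    finally show ?case .
  qed
qed

lemma eventually_Max_line_le:
  fixes f :: "'j \<Rightarrow> real \<Rightarrow> real"
  assumes fin: "finite J" and ne: "J \<noteq> {}"
    and upper: "\<And>j. j \<in> J \<Longrightarrow> \<forall>\<^sub>F t in at_right 0. f j t \<le> f j 0 + t * (D j + e)"
    and active: "\<And>k. k \<in> J \<Longrightarrow> \<forall>i\<in>J. f i 0 \<le> f k 0 \<Longrightarrow> D k \<le> m"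
  shows "\<forall>\<^sub>F t in at_right 0. Max ((\<lambda>j. f j t) ` J) \<le> Max ((\<lambda>j. f j 0) ` J) + t * (m + e)"
proof -
  define M where "M = Max ((\<lambda>j. f j 0) ` J)"
  have f_le_M: "f j 0 \<le> M" if "j \<in> J" for j
    using fin that by (auto simp: M_def)
  have "\<forall>\<^sub>F t in at_right 0. t * (D j - m) < M - f j 0"
    if "j \<in> J" "f j 0 \<noteq> M" for j
  proof (rule order_tendstoD(2))
    show "((\<lambda>t::real. t * (D j - m)) \<longlongrightarrow> 0 * (D j - m)) (at_right 0)"
      by (intro tendsto_intros)
    show "0 * (D j - m) < M - f j 0"
      using f_le_M[OF that(1)] that(2) by simp
  qed
  then have "\<forall>\<^sub>F t in at_right 0. \<forall>j\<in>J. f j t \<le> f j 0 + t * (D j + e) \<and>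
      (f j 0 \<noteq> M \<longrightarrow> t * (D j - m) < M - f j 0)"
    using fin upper by (auto simp: eventually_ball_finite_distrib eventually_conj_iff)
  moreover have "\<forall>\<^sub>F t in at_right 0. (t::real) > 0"
    by (simp add: eventually_at_right_less)
  ultimately show ?thesis
  proof eventually_elim
    case (elim t)
    have "f j t \<le> M + t * (m + e)" if j: "j \<in> J" for j
    proof (cases "f j 0 = M")
      case True
      then have "t * D j \<le> t * m"
        using active[OF j] f_le_M elim(2) by (simp add: mult_left_mono)
      then show ?thesis using elim(1) j True by (auto simp: algebra_simps)
    next
      case False
      then show ?thesis using elim(1) j by (auto simp: algebra_simps)
    qed
    then show ?case using fin ne by (simp add: M_def)
  qed
qed

lemma sum_Max_line_descent:
  fixes f :: "'j \<Rightarrow> real \<Rightarrow> real"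
  assumes fin: "finite J" and ne: "J \<noteq> {}"
    and upper: "\<And>j e. j \<in> J \<Longrightarrow> e > 0 \<Longrightarrow> \<forall>\<^sub>F t in at_right 0. f j t \<le> f j 0 + t * (D j + e)"
    and descent: "\<And>k. k \<in> J \<Longrightarrow> \<forall>i\<in>J. f i 0 \<le> f k 0 \<Longrightarrow> (\<Sum>j\<in>J. D j) + D k < 0"
  shows "\<exists>t>0. (\<Sum>j\<in>J. f j t) + Max ((\<lambda>j. f j t) ` J) < (\<Sum>j\<in>J. f j 0) + Max ((\<lambda>j. f j 0) ` J)"
proof -
  define A where "A = {k \<in> J. \<forall>i\<in>J. f i 0 \<le> f k 0}"
  have "Max ((\<lambda>j. f j 0) ` J) \<in> (\<lambda>j. f j 0) ` J"
    using fin ne by simp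
  then obtain k0 where "k0 \<in> J" "f k0 0 = Max ((\<lambda>j. f j 0) ` J)"
    by (metis imageE)
  then have "k0 \<in> A" using fin by (auto simp: A_def)
  then have A: "finite A" "A \<noteq> {}" using fin by (auto simp: A_def)
  define m where "m = Max (D ` A)"
  define S where "S = (\<Sum>j\<in>J. D j) + m"
  have "S < 0"
    using Max_in[of "D ` A"] A descent unfolding S_def m_def A_def by fastforce
  define e where "e = - S / (2 * (card J + 1))"
  have e: "e > 0" using \<open>S < 0\<close> by (simp add: e_def divide_neg_pos)
  have "\<forall>\<^sub>F t in at_right 0. Max ((\<lambda>j. f j t) ` J) \<le> Max ((\<lambda>j. f j 0) ` J) + t * (m + e)"
    using fin ne upper[OF _ e] A by (intro eventually_Max_line_le) (auto simp: m_def A_def)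
  moreover have "\<forall>\<^sub>F t in at_right 0. \<forall>j\<in>J. f j t \<le> f j 0 + t * (D j + e)"
    using fin upper[OF _ e] by (simp add: eventually_ball_finite)
  moreover have "\<forall>\<^sub>F t in at_right 0. (t::real) > 0"
    by (simp add: eventually_at_right_less)
  ultimately have "\<forall>\<^sub>F t in at_right 0. t > 0 \<and>
      (\<Sum>j\<in>J. f j t) + Max ((\<lambda>j. f j t) ` J) < (\<Sum>j\<in>J. f j 0) + Max ((\<lambda>j. f j 0) ` J)"
  proof eventually_elim
    case (elim t)
    have "(\<Sum>j\<in>J. f j t) \<le> (\<Sum>j\<in>J. f j 0 + t * (D j + e))"
      using elim(2) by (intro sum_mono) auto
    also have "\<dots> = (\<Sum>j\<in>J. f j 0) + t * (\<Sum>j\<in>J. D j) + t * card J * e"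
      by (simp add: sum.distrib sum_distrib_left algebra_simps)
    finally have "(\<Sum>j\<in>J. f j t) + Max ((\<lambda>j. f j t) ` J)
        \<le> (\<Sum>j\<in>J. f j 0) + Max ((\<lambda>j. f j 0) ` J) + t * (S + (card J + 1) * e)"
      using elim(1) by (simp add: S_def algebra_simps)
    moreover have "S + (card J + 1) * e = S / 2"
      by (simp add: e_def field_simps)
    then have "t * (S + (card J + 1) * e) < 0"
      using \<open>S < 0\<close> elim(3) by (simp add: mult_pos_neg)
    ultimately show ?case using elim(3) by linarith
  qed
  then show ?thesis
    by (auto dest: eventually_happens)
qed

definition farthest :: "'j set \<Rightarrow> ('j \<Rightarrow> 'a::real_normed_vector) \<Rightarrow> 'a \<Rightarrow> 'j set" where
  "farthest J y s = {k \<in> J. \<forall>i\<in>J. norm (s - y i) \<le> norm (s - y k)}"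

lemma P_farthest:
  assumes "beta > 0" "finite J" "k \<in> farthest J y s"
  shows "P beta J y s = (\<Sum>j\<in>J. norm (s - y j) powr beta) + norm (s - y k) powr beta"
  unfolding P_def using assms
  by (intro arg_cong[where f = "(+) _"] Max_eqI) (auto simp: farthest_def intro: powr_mono2)

lemma P_tangent_less:
  assumes b: "beta > 1" and fin: "finite J" and k: "k \<in> farthest J y s" and "d \<noteq> 0"
  shows "P beta J y s + ((\<Sum>j\<in>J. powr_grad beta (s - y j)) + powr_grad beta (s - y k)) \<bullet> d
    < P beta J y (s + d)"
proof -
  have k_J: "k \<in> J" using k by (simp add: farthest_def)
  have tangent: "norm (s - y j) powr beta + powr_grad beta (s - y j) \<bullet> d < norm (s + d - y j) powr beta"
    for j
    using norm_powr_tangent_less[OF b, of "s + d - y j" "s - y j"] \<open>d \<noteq> 0\<close>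
    by (simp add: algebra_simps)
  have "(\<Sum>j\<in>J. norm (s - y j) powr beta + powr_grad beta (s - y j) \<bullet> d)
      < (\<Sum>j\<in>J. norm (s + d - y j) powr beta)"
    using fin k_J tangent by (intro sum_strict_mono) auto
  moreover have "norm (s + d - y k) powr beta \<le> Max ((\<lambda>j. norm (s + d - y j) powr beta) ` J)"
    using fin k_J by (intro Max_ge) auto
  ultimately show ?thesis
    using P_farthest[OF _ fin k, of beta] tangent[of k] b
    by (simp add: P_def inner_add_left inner_sum_left sum.distrib)
qed

text \<open>First-order optimality condition: \<open>P\<^sub>\<beta>(\<cdot>, y)\<close> is convex, and its one-sided derivative at \<open>s\<close>
  in direction \<open>d\<close> is \<open>\<Sum>\<^sub>j \<nabla>\<^sub>j \<bullet> d + max\<^sub>k \<nabla>\<^sub>k \<bullet> d\<close>, the maximum ranging over the farthest points.\<close>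
lemma is_minimiser_P_iff:
  assumes b: "beta > 1" and fin: "finite J" and ne: "J \<noteq> {}"
  shows "is_minimiser (P beta J y) s \<longleftrightarrow>
    (\<forall>d. \<exists>k\<in>farthest J y s. 0 \<le> ((\<Sum>j\<in>J. powr_grad beta (s - y j)) + powr_grad beta (s - y k)) \<bullet> d)"
    (is "_ \<longleftrightarrow> (\<forall>d. \<exists>k\<in>_. 0 \<le> ?slope d k)")
proof
  assume min: "is_minimiser (P beta J y) s"
  show "\<forall>d. \<exists>k\<in>farthest J y s. 0 \<le> ?slope d k"
  proof (rule ccontr)
    assume "\<not> ?thesis"
    then obtain d where neg: "\<And>k. k \<in> farthest J y s \<Longrightarrow> ?slope d k < 0"
      by (auto simp: not_le)
    define f where "f j t = norm (s + t *\<^sub>R d - y j) powr beta" for j t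
    have "\<exists>t>0. (\<Sum>j\<in>J. f j t) + Max ((\<lambda>j. f j t) ` J) < (\<Sum>j\<in>J. f j 0) + Max ((\<lambda>j. f j 0) ` J)"
    proof (rule sum_Max_line_descent[OF fin ne, of _ "\<lambda>j. powr_grad beta (s - y j) \<bullet> d"])
      show "\<forall>\<^sub>F t in at_right 0. f j t \<le> f j 0 + t * (powr_grad beta (s - y j) \<bullet> d + e)"
        if "e > 0" for j e
        using eventually_norm_powr_line_le[OF b that, of "s - y j" d]
        by (simp add: f_def algebra_simps)
      show "(\<Sum>j\<in>J. powr_grad beta (s - y j) \<bullet> d) + powr_grad beta (s - y k) \<bullet> d < 0"
        if "k \<in> J" "\<forall>i\<in>J. f i 0 \<le> f k 0" for k
        using that neg[of k] b powr_le_powr_iff[of "norm (s - y _)" "norm (s - y k)" beta]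
        by (simp add: f_def farthest_def inner_add_left inner_sum_left)
    qed
    then obtain t where "P beta J y (s + t *\<^sub>R d) < P beta J y s"
      by (auto simp: P_def f_def)
    with min show False
      unfolding is_minimiser_def by (meson not_le)
  qed
next
  assume slope: "\<forall>d. \<exists>k\<in>farthest J y s. 0 \<le> ?slope d k"
  show "is_minimiser (P beta J y) s"
    unfolding is_minimiser_def
  proof
    fix u
    obtain k where "k \<in> farthest J y s" "0 \<le> ?slope (u - s) k"
      using slope by blast
    then show "P beta J y s \<le> P beta J y u"
      using P_tangent_less[OF b fin, of k y s "u - s"] by (cases "u = s") auto
  qed
qed

lemma P_minimiser_unique:
  assumes "beta > 1" "finite J" "J \<noteq> {}"
    and "is_minimiser (P beta J y) s1" "is_minimiser (P beta J y) s2"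
  shows "s1 = s2"
proof (rule ccontr)
  assume "s1 \<noteq> s2"
  obtain k where "k \<in> farthest J y s1"
    "0 \<le> ((\<Sum>j\<in>J. powr_grad beta (s1 - y j)) + powr_grad beta (s1 - y k)) \<bullet> (s2 - s1)"
    using assms(4) is_minimiser_P_iff[OF assms(1-3)] by blast
  then have "P beta J y s1 < P beta J y s2"
    using P_tangent_less[OF assms(1,2), of k y s1 "s2 - s1"] \<open>s1 \<noteq> s2\<close> by simp
  with assms(5) show False
    unfolding is_minimiser_def by (meson not_le)
qed

lemma norm_powr_le_P:
  assumes "finite J" "j \<in> J"
  shows "norm (s - y j) powr beta \<le> P beta J y s"
proof -
  have "0 \<le> norm (s - y j) powr beta" by simp
  also have "\<dots> \<le> Max ((\<lambda>j. norm (s - y j) powr beta) ` J)"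
    using assms by (intro Max_ge) auto
  finally show ?thesis
    unfolding P_def using assms by (intro add_increasing2 member_le_sum) auto
qed

lemma continuous_on_Max_image:
  fixes f :: "'j \<Rightarrow> 'a::topological_space \<Rightarrow> real"
  assumes "finite J" "J \<noteq> {}" "\<And>j. j \<in> J \<Longrightarrow> continuous_on S (f j)"
  shows "continuous_on S (\<lambda>s. Max ((\<lambda>j. f j s) ` J))"
  using assms
proof (induction J rule: finite_ne_induct)
  case (insert j J)
  then have "continuous_on S (\<lambda>s. max (f j s) (Max ((\<lambda>j. f j s) ` J)))"
    by (intro continuous_on_max) auto
  with insert show ?case by simp
qed simp

lemma continuous_on_P:
  assumes "beta > 0" "finite J" "J \<noteq> {}"
  shows "continuous_on UNIV (P beta J y)"
  unfolding P_def[abs_def] using assms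
  by (intro continuous_on_add continuous_on_sum continuous_on_Max_image continuous_on_powr'
      continuous_intros) auto

text \<open>Coercivity: outside the ball of radius \<open>max 1 (P\<^sub>\<beta>(y\<^sub>j\<^sub>0) + 1)\<close> around any \<open>y\<^sub>j\<^sub>0\<close>, already the
  summand \<open>\<parallel>t - y\<^sub>j\<^sub>0\<parallel>\<^sup>\<beta>\<close> of \<open>P\<^sub>\<beta>(t)\<close> exceeds \<open>P\<^sub>\<beta>(y\<^sub>j\<^sub>0)\<close>.\<close>
lemma P_minimiser_exists:
  assumes b: "beta > 1" and fin: "finite J" and ne: "J \<noteq> {}"
  shows "\<exists>s. is_minimiser (P beta J y) s"
proof -
  obtain j0 where j0: "j0 \<in> J" using ne by auto
  define R where "R = max 1 (P beta J y (y j0) + 1)"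
  obtain s0 where s0: "s0 \<in> cball (y j0) R" "\<forall>t\<in>cball (y j0) R. P beta J y s0 \<le> P beta J y t"
    using continuous_attains_inf[of "cball (y j0) R" "P beta J y"]
      continuous_on_subset[OF continuous_on_P[OF _ fin ne] subset_UNIV] b R_def by auto
  have "P beta J y s0 \<le> P beta J y t" for t
  proof (cases "t \<in> cball (y j0) R")
    case False
    then have far: "R < norm (t - y j0)" by (simp add: dist_norm norm_minus_commute)
    have "P beta J y s0 \<le> P beta J y (y j0)"
      using s0(2) R_def by simp
    also have "\<dots> < norm (t - y j0) powr 1"
      using far R_def by simp
    also have "\<dots> \<le> norm (t - y j0) powr beta"
      using b far R_def by (intro powr_mono) auto
    also have "\<dots> \<le> P beta J y t"
      using norm_powr_le_P[OF fin j0] .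
    finally show ?thesis by simp
  qed (use s0 in auto)
  then show ?thesis unfolding is_minimiser_def by blast
qed

lemma is_minimiser_P_iff_s_star:
  assumes "beta > 1" "finite J" "J \<noteq> {}"
  shows "is_minimiser (P beta J y) s \<longleftrightarrow> s = s_star beta J y"
proof -
  have "\<exists>!s. is_minimiser (P beta J y) s"
    using P_minimiser_exists[OF assms] P_minimiser_unique[OF assms] by blast
  then show ?thesis
    unfolding s_star_def by (metis the1_equality theI')
qed

lemma powr_grad_two: "powr_grad 2 z = 2 *\<^sub>R z"
  by (cases "z = 0") (simp_all add: powr_grad_def)

lemma diff_Xs: "s - Xs alpha x s j = norm (s - x j) powr (alpha - 2) *\<^sub>R (s - x j)"
  by (simp add: Xs_def algebra_simps)

lemma powr_grad_eq_scaleR_diff_Xs: "powr_grad alpha (s - x j) = alpha *\<^sub>R (s - Xs alpha x s j)"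
  by (simp add: powr_grad_def diff_Xs)

lemma farthest_Xs:
  assumes "alpha > 1"
  shows "farthest J (Xs alpha x s) s = farthest J x s"
proof -
  have "norm (s - Xs alpha x s j) = norm (s - x j) powr (alpha - 1)" for j
    using powr_mult_self[of "norm (s - x j)" "alpha - 2"] by (simp add: diff_Xs)
  then show ?thesis
    using assms by (simp add: farthest_def powr_le_powr_iff)
qed

theorem lemma10:
  fixes alpha :: real and J :: "'j set" and x :: "'j \<Rightarrow> real^2" and s' :: "real^2"
  assumes "alpha > 1" and "finite J" and "J \<noteq> {}"
  shows "is_minimiser (\<lambda>s. P 2 J (Xs alpha x s') s) s' \<longleftrightarrow> s' = s_star alpha J x"
proof -
  define w where "w j = s' - Xs alpha x s' j" for j
  have scaled: "0 \<le> ((\<Sum>j\<in>J. c *\<^sub>R w j) + c *\<^sub>R w k) \<bullet> d \<longleftrightarrow> 0 \<le> ((\<Sum>j\<in>J. w j) + w k) \<bullet> d"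
    if "c > 0" for c k d
    using that by (simp add: zero_le_mult_iff flip: scaleR_sum_right scaleR_add_right)
  have "is_minimiser (P 2 J (Xs alpha x s')) s' \<longleftrightarrow>
      (\<forall>d. \<exists>k\<in>farthest J x s'. 0 \<le> ((\<Sum>j\<in>J. w j) + w k) \<bullet> d)"
    using is_minimiser_P_iff[of 2 J "Xs alpha x s'" s'] assms scaled[of 2]
    by (simp add: w_def powr_grad_two farthest_Xs)
  also have "\<dots> \<longleftrightarrow> is_minimiser (P alpha J x) s'"
    using is_minimiser_P_iff[OF assms, of x s'] assms scaled[of alpha]
    by (simp add: w_def powr_grad_eq_scaleR_diff_Xs)
  also have "\<dots> \<longleftrightarrow> s' = s_star alpha J x"
    by (rule is_minimiser_P_iff_s_star[OF assms])
  finally show ?thesis .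
qed

end
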